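(* Let $f:\{0,1\}^n\to\{0,1\}$ be a non-constant total symmetric Boolean function and let $t_f$ be as defined in the context. Then \[ \lambda(f) \ge \sqrt{t_f\,(n+1-t_f)}, \] and consequently $\lambda(f) = \Omega(\sqrt{t_f\cdot n})$.
   Context: A Boolean function $f:\{0,1\}^n\to\{0,1\}$ is symmetric if $f(x)$ depends only on the Hamming weight $|x|$ (number of ones). For such $f$, $t_f$ is the minimum nonnegative integer $t$ such that $f$ is constant on all inputs $x$ with $t\le |x|\le n-t$ (the condition being vacuous if this range is empty). The sensitivity graph of $f$ has vertex set $\{0,1\}^n$, with $x,y$ adjacent iff they differ in exactly one coordinate and $f(x)\neq f(y)$; $A_f$ is its adjacency matrix, and the spectral sensitivity is $\lambda(f)=\|A_f\|$, the spectral norm of $A_f$. *)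

theory Defs
  imports Complex_Main
begin

text \<open>Inputs x in {0,1}^n are encoded as subsets of {..<n} (the set of coordinates equal to 1);
  the Hamming weight is card x. A Boolean function is f :: nat set \<Rightarrow> bool, only its values
  on subsets of {..<n} matter.\<close>

definition cube :: "nat \<Rightarrow> nat set set" where
  "cube n = Pow {..<n}"

definition symmetric_bf :: "nat \<Rightarrow> (nat set \<Rightarrow> bool) \<Rightarrow> bool" where
  "symmetric_bf n f \<longleftrightarrow> (\<forall>x\<in>cube n. \<forall>y\<in>cube n. card x = card y \<longrightarrow> f x = f y)"

definition nonconstant_bf :: "nat \<Rightarrow> (nat set \<Rightarrow> bool) \<Rightarrow> bool" where
  "nonconstant_bf n f \<longleftrightarrow> (\<exists>x\<in>cube n. \<exists>y\<in>cube n. f x \<noteq> f y)"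

definition t_f :: "nat \<Rightarrow> (nat set \<Rightarrow> bool) \<Rightarrow> nat" where
  "t_f n f = (LEAST t. \<forall>x\<in>cube n. \<forall>y\<in>cube n.
      t \<le> card x \<and> card x + t \<le> n \<and> t \<le> card y \<and> card y + t \<le> n \<longrightarrow> f x = f y)"

definition sens_adj :: "nat \<Rightarrow> (nat set \<Rightarrow> bool) \<Rightarrow> nat set \<Rightarrow> nat set \<Rightarrow> real" where
  "sens_adj n f x y =
     (if x \<in> cube n \<and> y \<in> cube n \<and> card ((x - y) \<union> (y - x)) = 1 \<and> f x \<noteq> f y then 1 else 0)"

definition spectral_sensitivity :: "nat \<Rightarrow> (nat set \<Rightarrow> bool) \<Rightarrow> real" where
  "spectral_sensitivity n f = Sup {sqrt (\<Sum>x\<in>cube n. (\<Sum>y\<in>cube n. sens_adj n f x y * v y)\<^sup>2) | v.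
       (\<Sum>x\<in>cube n. (v x)\<^sup>2) = 1}"

end

theory Submission
  imports Defs
begin

text \<open>For symmetric f with t = t_f > 0, minimality of t yields a weight k with
  t - 1 \<le> k \<le> n - t at which f changes its value between the layers k and k + 1 of the cube.
  Then every edge between these two layers is sensitive, so the adjacency matrix maps the
  indicator vector of layer k to a vector that is k + 1 on all of layer k + 1. Comparing norms gives
  \<lambda>(f)^2 \<ge> (k + 1)(n - k) \<ge> t(n + 1 - t), and t \<le> n/2 + 1 turns this into t(n + 1 - t) \<ge> tn/2.\<close>

lemma finite_cube: "finite (cube n)"
  by (simp add: cube_def)

lemma finite_of_mem_cube: "x \<in> cube n \<Longrightarrow> finite x"
  unfolding cube_def by (meson PowD finite_lessThan finite_subset)

lemma card_le_of_mem_cube: "x \<in> cube n \<Longrightarrow> card x \<le> n"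
  unfolding cube_def by (metis PowD card_lessThan card_mono finite_lessThan)

lemma card_cube_layer: "card {x \<in> cube n. card x = k} = n choose k"
proof -
  have "{x \<in> cube n. card x = k} = {B. B \<subseteq> {..<n} \<and> card B = k}"
    by (auto simp: cube_def)
  then show ?thesis by (simp add: n_subsets)
qed

lemma Suc_times_choose_Suc: "Suc k * (n choose Suc k) = (n - k) * (n choose k)"
proof (cases n)
  case (Suc m)
  then show ?thesis using Suc_times_binomial[of k m] binomial_absorb_comp[of n k] by simp
qed simp

lemma card_symdiff_eq_1_iff_subset:
  assumes "finite x" "finite y" "card x = Suc (card y)"
  shows "card ((x - y) \<union> (y - x)) = 1 \<longleftrightarrow> y \<subseteq> x"
proof -
  have "card ((x - y) \<union> (y - x)) = card (x - y) + card (y - x)"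
    by (rule card_Un_disjoint) (use assms in auto)
  moreover have "card x = card (x \<inter> y) + card (x - y)" "card y = card (y \<inter> x) + card (y - x)"
    using assms(1,2) by (simp_all add: card_Int_Diff)
  ultimately have "card ((x - y) \<union> (y - x)) = 1 \<longleftrightarrow> card (y - x) = 0"
    using assms(3) by (simp add: Int_commute) linarith
  also have "\<dots> \<longleftrightarrow> y \<subseteq> x"
    using assms(2) by simp
  finally show ?thesis .
qed

lemma bdd_above_sens_adj_norms:
  "bdd_above {sqrt (\<Sum>x\<in>cube n. (\<Sum>y\<in>cube n. sens_adj n f x y * v y)\<^sup>2) | v.
     (\<Sum>x\<in>cube n. (v x)\<^sup>2) = 1}"
proof -
  define N where "N = real (card (cube n))"
  have "sqrt (\<Sum>x\<in>cube n. (\<Sum>y\<in>cube n. sens_adj n f x y * v y)\<^sup>2) \<le> sqrt (N * N\<^sup>2)"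
    if unit: "(\<Sum>x\<in>cube n. (v x)\<^sup>2) = 1" for v
  proof -
    have v_le_1: "\<bar>v y\<bar> \<le> 1" if "y \<in> cube n" for y
    proof -
      have "(v y)\<^sup>2 \<le> (\<Sum>x\<in>cube n. (v x)\<^sup>2)"
        by (rule member_le_sum) (auto simp: that finite_cube)
      then show ?thesis using unit by (simp add: abs_square_le_1)
    qed
    have "\<bar>\<Sum>y\<in>cube n. sens_adj n f x y * v y\<bar> \<le> N" for x
    proof -
      have "\<bar>\<Sum>y\<in>cube n. sens_adj n f x y * v y\<bar> \<le> (\<Sum>y\<in>cube n. \<bar>sens_adj n f x y * v y\<bar>)"
        by (rule sum_abs)
      also have "\<dots> \<le> (\<Sum>y\<in>cube n. 1)"
        using v_le_1 by (intro sum_mono) (auto simp: sens_adj_def abs_mult)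
      finally show ?thesis by (simp add: N_def)
    qed
    then have "(\<Sum>x\<in>cube n. (\<Sum>y\<in>cube n. sens_adj n f x y * v y)\<^sup>2) \<le> (\<Sum>x\<in>cube n. N\<^sup>2)"
      by (intro sum_mono) (metis abs_ge_zero power2_abs power_mono)
    then show ?thesis by (simp add: N_def)
  qed
  then show ?thesis unfolding bdd_above_def by blast
qed

lemma sens_adj_norm_le_spectral_sensitivity:
  assumes "(\<Sum>x\<in>cube n. (v x)\<^sup>2) = 1"
  shows "sqrt (\<Sum>x\<in>cube n. (\<Sum>y\<in>cube n. sens_adj n f x y * v y)\<^sup>2) \<le> spectral_sensitivity n f"
  unfolding spectral_sensitivity_def
  by (rule cSup_upper[OF _ bdd_above_sens_adj_norms]) (use assms in blast)

lemma spectral_sensitivity_nonneg: "0 \<le> spectral_sensitivity n f"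
proof -
  have "(\<Sum>x\<in>cube n. (if x = {} then 1 else 0 :: real)\<^sup>2) = 1"
    by (simp add: cube_def if_distrib[of "\<lambda>r. r\<^sup>2"] cong: if_cong)
  from sens_adj_norm_le_spectral_sensitivity[OF this] show ?thesis
    by (meson order_trans real_sqrt_ge_zero sum_nonneg zero_le_power2)
qed

lemma sens_adj_norm_sq_le:
  "(\<Sum>x\<in>cube n. (\<Sum>y\<in>cube n. sens_adj n f x y * v y)\<^sup>2)
     \<le> (spectral_sensitivity n f)\<^sup>2 * (\<Sum>x\<in>cube n. (v x)\<^sup>2)"
proof (cases "(\<Sum>x\<in>cube n. (v x)\<^sup>2) = 0")
  case True
  then have "v y = 0" if "y \<in> cube n" for y
    using that by (simp add: sum_nonneg_eq_0_iff finite_cube)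
  then show ?thesis by simp
next
  case False
  define S where "S = (\<Sum>x\<in>cube n. (v x)\<^sup>2)"
  have S_pos: "S > 0" using False by (simp add: S_def order_le_neq_trans sum_nonneg)
  define w where "w y = v y / sqrt S" for y
  have "(\<Sum>x\<in>cube n. (w x)\<^sup>2) = 1"
    using S_pos by (simp add: w_def power_divide S_def flip: sum_divide_distrib)
  from sens_adj_norm_le_spectral_sensitivity[OF this, of f]
  have "(sqrt (\<Sum>x\<in>cube n. (\<Sum>y\<in>cube n. sens_adj n f x y * w y)\<^sup>2))\<^sup>2
      \<le> (spectral_sensitivity n f)\<^sup>2"
    by (rule power_mono) (simp add: sum_nonneg)
  moreover have "(\<Sum>x\<in>cube n. (\<Sum>y\<in>cube n. sens_adj n f x y * w y)\<^sup>2)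
      = (\<Sum>x\<in>cube n. (\<Sum>y\<in>cube n. sens_adj n f x y * v y)\<^sup>2) / S"
    using S_pos by (simp add: w_def power_divide flip: sum_divide_distrib)
  ultimately show ?thesis
    using S_pos by (simp add: S_def divide_le_eq mult.commute sum_nonneg)
qed

lemma spectral_sensitivity_ge_layer:
  assumes "k < n"
    and separates: "\<And>x y. x \<in> cube n \<Longrightarrow> y \<in> cube n \<Longrightarrow> card x = Suc k \<Longrightarrow> card y = k \<Longrightarrow> f x \<noteq> f y"
  shows "sqrt (real (Suc k) * real (n - k)) \<le> spectral_sensitivity n f"
proof -
  define v :: "nat set \<Rightarrow> real" where "v y = (if card y = k then 1 else 0)" for y
  define C where "C = real (n choose k)"
  have C_pos: "C > 0" using \<open>k < n\<close> by (simp add: C_def)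
  have "(\<Sum>x\<in>cube n. (v x)\<^sup>2) = (\<Sum>x\<in>{x \<in> cube n. card x = k}. 1)"
    unfolding sum.inter_filter[OF finite_cube] by (rule sum.cong) (auto simp: v_def)
  also have "\<dots> = C" by (simp add: card_cube_layer C_def)
  finally have norm_v: "(\<Sum>x\<in>cube n. (v x)\<^sup>2) = C" .
  have Av: "(\<Sum>y\<in>cube n. sens_adj n f x y * v y) = real (Suc k)"
    if x: "x \<in> cube n" "card x = Suc k" for x
  proof -
    have "(\<Sum>y\<in>cube n. sens_adj n f x y * v y) = (\<Sum>y\<in>{y \<in> cube n. y \<subseteq> x \<and> card y = k}. 1)"
      unfolding sum.inter_filter[OF finite_cube]
    proof (rule sum.cong[OF refl])
      fix y assume "y \<in> cube n"
      then show "sens_adj n f x y * v y = (if y \<subseteq> x \<and> card y = k then 1 else 0)"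
        using x separates card_symdiff_eq_1_iff_subset[OF finite_of_mem_cube finite_of_mem_cube]
        by (auto simp: sens_adj_def v_def)
    qed
    also have "{y \<in> cube n. y \<subseteq> x \<and> card y = k} = {y. y \<subseteq> x \<and> card y = k}"
      using x by (auto simp: cube_def)
    finally show ?thesis using x by (simp add: n_subsets finite_of_mem_cube)
  qed
  have "real (Suc k) * real (n - k) * C = real (Suc k) * (real (Suc k) * real (n choose Suc k))"
    unfolding C_def mult.assoc of_nat_mult[symmetric] Suc_times_choose_Suc ..
  also have "\<dots> = real (n choose Suc k) * (real (Suc k))\<^sup>2"
    by (simp only: power2_eq_square ac_simps)
  also have "\<dots> = (\<Sum>x\<in>{x \<in> cube n. card x = Suc k}. (\<Sum>y\<in>cube n. sens_adj n f x y * v y)\<^sup>2)"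
    by (simp add: Av card_cube_layer)
  also have "\<dots> \<le> (\<Sum>x\<in>cube n. (\<Sum>y\<in>cube n. sens_adj n f x y * v y)\<^sup>2)"
    by (rule sum_mono2) (auto simp: finite_cube)
  also have "\<dots> \<le> (spectral_sensitivity n f)\<^sup>2 * C"
    using sens_adj_norm_sq_le[of n f v] by (simp add: norm_v)
  finally show ?thesis
    using C_pos by (intro real_le_lsqrt spectral_sensitivity_nonneg) simp
qed

lemma symmetric_bf_eq_initial_segment:
  assumes "symmetric_bf n f" "x \<in> cube n"
  shows "f x = f {..<card x}"
proof -
  have "{..<card x} \<in> cube n" using card_le_of_mem_cube[OF assms(2)] by (simp add: cube_def)
  moreover have "card {..<card x} = card x" by simp
  ultimately show ?thesis using assms unfolding symmetric_bf_def by blast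
qed

lemma exists_change_between:
  fixes g :: "nat \<Rightarrow> 'a"
  assumes "g a \<noteq> g b"
  shows "\<exists>k. min a b \<le> k \<and> k < max a b \<and> g k \<noteq> g (Suc k)"
proof -
  have "\<exists>k. a \<le> k \<and> k < b \<and> g k \<noteq> g (Suc k)" if "a \<le> b" "g a \<noteq> g b" for a b
    using that
  proof (induction b rule: dec_induct)
    case (step b)
    show ?case
    proof (cases "g b = g (Suc b)")
      case True
      with step obtain k where "a \<le> k" "k < b" "g k \<noteq> g (Suc k)" by auto
      then show ?thesis by (intro exI[of _ k]) simp
    next
      case False
      with step.hyps show ?thesis by blast
    qed
  qed simp
  from this[of a b] this[of b a] assms show ?thesis
    by (cases a b rule: le_cases) (auto simp: min_def max_def)
qed

lemma t_f_le: "t_f n f \<le> Suc (n div 2)"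
  unfolding t_f_def by (rule Least_le) auto

lemma t_f_layer_change:
  assumes "symmetric_bf n f" "0 < t_f n f"
  shows "\<exists>k. t_f n f \<le> Suc k \<and> k + t_f n f \<le> n \<and> f {..<k} \<noteq> f {..<Suc k}"
proof -
  let ?t = "t_f n f"
  define P where "P t \<longleftrightarrow> (\<forall>x\<in>cube n. \<forall>y\<in>cube n.
      t \<le> card x \<and> card x + t \<le> n \<and> t \<le> card y \<and> card y + t \<le> n \<longrightarrow> f x = f y)" for t
  have "?t = (LEAST t. P t)" unfolding t_f_def P_def ..
  then have "\<not> P (?t - 1)"
    using assms(2) by (metis diff_less not_less_Least zero_less_one)
  then obtain x y where "x \<in> cube n" "y \<in> cube n" "?t - 1 \<le> card x" "card x + (?t - 1) \<le> n"
      "?t - 1 \<le> card y" "card y + (?t - 1) \<le> n" "f x \<noteq> f y"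
    unfolding P_def by blast
  moreover from this have "f {..<card x} \<noteq> f {..<card y}"
    using symmetric_bf_eq_initial_segment[OF assms(1)] by metis
  then obtain k where "min (card x) (card y) \<le> k" "k < max (card x) (card y)"
      "f {..<k} \<noteq> f {..<Suc k}"
    using exists_change_between[of "\<lambda>j. f {..<j}"] by blast
  ultimately show ?thesis
    using assms(2) by (intro exI[of _ k]) (auto simp: min_def max_def split: if_splits)
qed

lemma spectral_sensitivity_ge_t_f:
  assumes "symmetric_bf n f"
  shows "sqrt (real (t_f n f) * (real n + 1 - real (t_f n f))) \<le> spectral_sensitivity n f"
proof (cases "t_f n f = 0")
  case True
  then show ?thesis using spectral_sensitivity_nonneg by simp
next
  case False
  let ?t = "t_f n f"
  obtain k where k: "?t \<le> Suc k" "k + ?t \<le> n" "f {..<k} \<noteq> f {..<Suc k}"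
    using t_f_layer_change[OF assms] False by blast
  have "sqrt (real (Suc k) * real (n - k)) \<le> spectral_sensitivity n f"
    using k False symmetric_bf_eq_initial_segment[OF assms]
    by (intro spectral_sensitivity_ge_layer) auto
  moreover have "real ?t * (real n + 1 - real ?t) \<le> real (Suc k) * real (n - k)"
  proof -
    have "0 \<le> (real (Suc k) - real ?t) * (real n + 1 - real ?t - real (Suc k))"
      using k by (intro mult_nonneg_nonneg) auto
    then show ?thesis using k by (simp add: of_nat_diff algebra_simps)
  qed
  ultimately show ?thesis by (meson order_trans real_sqrt_le_mono)
qed

lemma sqrt_t_f_times_n_le:
  "1 / sqrt 2 * sqrt (real (t_f n f) * real n) \<le> sqrt (real (t_f n f) * (real n + 1 - real (t_f n f)))"
proof -
  have "1 / sqrt 2 * sqrt (real (t_f n f) * real n) = sqrt (real (t_f n f) * (real n / 2))"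
    by (simp add: real_sqrt_mult real_sqrt_divide)
  also have "\<dots> \<le> sqrt (real (t_f n f) * (real n + 1 - real (t_f n f)))"
    using t_f_le[of n f] by (intro real_sqrt_le_mono mult_left_mono) linarith+
  finally show ?thesis .
qed

theorem mainTheorem3:
  shows "(\<forall>n f. symmetric_bf n f \<and> nonconstant_bf n f \<longrightarrow>
            spectral_sensitivity n f \<ge> sqrt (real (t_f n f) * (real n + 1 - real (t_f n f))))
       \<and> (\<exists>c>0. \<forall>n f. symmetric_bf n f \<and> nonconstant_bf n f \<longrightarrow>
            spectral_sensitivity n f \<ge> c * sqrt (real (t_f n f) * real n))"
proof (intro conjI allI impI)
  fix n f assume "symmetric_bf n f \<and> nonconstant_bf n f"
  then show "sqrt (real (t_f n f) * (real n + 1 - real (t_f n f))) \<le> spectral_sensitivity n f"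
    by (simp add: spectral_sensitivity_ge_t_f)
next
  show "\<exists>c>0. \<forall>n f. symmetric_bf n f \<and> nonconstant_bf n f \<longrightarrow>
            spectral_sensitivity n f \<ge> c * sqrt (real (t_f n f) * real n)"
  proof (intro exI[of _ "1 / sqrt 2"] conjI allI impI)
    show "(0::real) < 1 / sqrt 2" by simp
    fix n f assume "symmetric_bf n f \<and> nonconstant_bf n f"
    then show "1 / sqrt 2 * sqrt (real (t_f n f) * real n) \<le> spectral_sensitivity n f"
      using sqrt_t_f_times_n_le[of n f] spectral_sensitivity_ge_t_f by (meson order_trans)
  qed
qed

end
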